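(* With the mesh, the coefficients $a^{(n)}_{n-k}$ and the DCC kernels $p^{(n)}_{n-k}$ as in the context (in particular $\tau_{n-1}\le\tau_n$ for $2\le n\le N$), for every $1\le n\le N$ we have $p^{(n)}_{n-k}\ge0$ for $1\le k\le n$, and $$\sum_{j=1}^n p^{(n)}_{n-j}\le \omega_{1+\alpha}(t_{n-1/2}).$$
   Context: Fix $T>0$, $0<\alpha<1$ and a mesh $0=t_0<t_1<\dots<t_N=T$ with step sizes $\tau_n=t_n-t_{n-1}$ satisfying $\tau_{n-1}\le\tau_n$ for $2\le n\le N$. Set $t_{-1/2}=t_0$, $t_{n-1/2}=t_{n-1}+\tau_n/2$ for $1\le n\le N$, $\tau_{1/2}=\tau_1/2$ and $\tau_{n-1/2}=(\tau_n+\tau_{n-1})/2$ for $n\ge 2$. Let $\omega_\gamma(t)=t^{\gamma-1}/\Gamma(\gamma)$ for $t>0$. For $1\le n\le N$ and $1\le k\le n$ define $$a^{(n)}_{n-k}=\frac{1}{\tau_{k-1/2}}\int_{t_{k-3/2}}^{t_{k-1/2}}\omega_{1-\alpha}(t_{n-1/2}-s)\,ds .$$ The discrete complementary convolution (DCC) kernels are defined by $p^{(n)}_0=1/a^{(n)}_0$ and $p^{(n)}_{n-k}=\frac{1}{a^{(k)}_0}\sum_{j=k+1}^n\big(a^{(j)}_{j-k-1}-a^{(j)}_{j-k}\big)p^{(n)}_{n-j}$ for $1\le k\le n-1$; equivalently $\sum_{j=k}^n p^{(n)}_{n-j}a^{(j)}_{j-k}=1$ for all $1\le k\le n$. *)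

theory Defs
  imports "HOL-Analysis.Analysis"
begin

definition omega :: "real \<Rightarrow> real \<Rightarrow> real" where
  "omega \<gamma> s = s powr (\<gamma> - 1) / Gamma \<gamma>"

definition tau :: "(nat \<Rightarrow> real) \<Rightarrow> nat \<Rightarrow> real" where
  "tau t n = t n - t (n - 1)"

definition tmid :: "(nat \<Rightarrow> real) \<Rightarrow> nat \<Rightarrow> real" where
  "tmid t n = (if n = 0 then t 0 else t (n - 1) + tau t n / 2)"

definition tauhalf :: "(nat \<Rightarrow> real) \<Rightarrow> nat \<Rightarrow> real" where
  "tauhalf t n = (if n \<le> 1 then tau t 1 / 2 else (tau t n + tau t (n - 1)) / 2)"

text \<open>acoef t alpha n m = a^{(n)}_m, i.e. a^{(n)}_{n-k} with k = n - m.\<close>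
definition acoef :: "(nat \<Rightarrow> real) \<Rightarrow> real \<Rightarrow> nat \<Rightarrow> nat \<Rightarrow> real" where
  "acoef t \<alpha> n m = (let k = n - m in
     (1 / tauhalf t k) *
       integral {tmid t (k - 1) .. tmid t k} (\<lambda>s. omega (1 - \<alpha>) (tmid t n - s)))"

text \<open>DCC kernels: dcc A n m = p^{(n)}_m (with k = n - m), where A n m = a^{(n)}_m.
  p^{(n)}_0 = 1/a^{(n)}_0 and, for 1 <= k <= n-1,
  p^{(n)}_{n-k} = (1/a^{(k)}_0) * sum_{j=k+1}^n (a^{(j)}_{j-k-1} - a^{(j)}_{j-k}) p^{(n)}_{n-j}.
  Values with m >= n (i.e. k <= 0) are irrelevant and set to 0.\<close>
function dcc :: "(nat \<Rightarrow> nat \<Rightarrow> real) \<Rightarrow> nat \<Rightarrow> nat \<Rightarrow> real" where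
  "dcc A n m =
     (if m = 0 then 1 / A n 0
      else if n \<le> m then 0
      else (1 / A (n - m) 0) *
        (\<Sum>j = n - m + 1 .. n. (A j (j - (n - m) - 1) - A j (j - (n - m))) * dcc A n (n - j)))"
  by pat_completeness auto
termination
  by (relation "Wellfounded.measure (\<lambda>(A, n, m). m)") auto

end

theory Submission
  imports Defs
begin

(* The coefficient a^(j)_(j-k) is the average over the cell [t_(k-3/2), t_(k-1/2)] of
   s |-> omega_(1-alpha)(t_(j-1/2) - s), which increases in s.  Hence these coefficients are positive
   and increase with k, and the recursion for the DCC kernels shows by induction that the kernels
   are nonnegative.  For the sum bound, int_0^t omega_(1-alpha)(t - s) omega_alpha(s) ds = 1, and
   Chebyshev's inequality on each cell (one factor increasing, the other decreasing) turns this into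
   sum_k a^(j)_(j-k) Delta_k >= 1, where Delta_k is the integral of omega_alpha over the k-th cell.
   Multiplying by p^(n)_(n-j) >= 0, summing over j and using the complementary identity
   sum_(j>=k) p^(n)_(n-j) a^(j)_(j-k) = 1 gives sum_j p^(n)_(n-j) <= sum_k Delta_k = omega_(1+alpha)(t_(n-1/2)). *)

lemma const_mul_length_le_integral:
  fixes f :: "real \<Rightarrow> real"
  assumes "a \<le> b" and "f integrable_on {a..b}" and "\<And>x. a < x \<Longrightarrow> x < b \<Longrightarrow> C \<le> f x"
  shows "C * (b - a) \<le> integral {a..b} f"
proof -
  have "((\<lambda>x. C) has_integral C * (b - a)) {a<..<b}"
    using has_integral_const_real[of C a b] assms(1) by (simp add: has_integral_Icc_iff_Ioo mult.commute)
  moreover have "(f has_integral integral {a..b} f) {a<..<b}"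
    using assms(2) by (simp add: has_integral_Icc_iff_Ioo[symmetric] integrable_integral)
  ultimately show ?thesis
    by (rule has_integral_le) (use assms(3) in auto)
qed

lemma integral_le_const_mul_length:
  fixes f :: "real \<Rightarrow> real"
  assumes "a \<le> b" and "f integrable_on {a..b}" and "\<And>x. a < x \<Longrightarrow> x < b \<Longrightarrow> f x \<le> C"
  shows "integral {a..b} f \<le> C * (b - a)"
proof -
  have "(f has_integral integral {a..b} f) {a<..<b}"
    using assms(2) by (simp add: has_integral_Icc_iff_Ioo[symmetric] integrable_integral)
  moreover have "((\<lambda>x. C) has_integral C * (b - a)) {a<..<b}"
    using has_integral_const_real[of C a b] assms(1) by (simp add: has_integral_Icc_iff_Ioo mult.commute)
  ultimately show ?thesis
    by (rule has_integral_le) (use assms(3) in auto)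
qed

lemma integral_sum_cells:
  fixes c :: "nat \<Rightarrow> real" and h :: "real \<Rightarrow> real"
  assumes "\<And>i j. i \<le> j \<Longrightarrow> j \<le> m \<Longrightarrow> c i \<le> c j" and "h integrable_on {c 0..c m}"
  shows "integral {c 0..c m} h = (\<Sum>k=1..m. integral {c (k - 1)..c k} h)"
  using assms
proof (induction m)
  case (Suc m)
  have "h integrable_on {c 0..c m}"
    by (rule integrable_subinterval_real[OF Suc.prems(2)]) (use Suc.prems(1) in auto)
  then have "integral {c 0..c m} h = (\<Sum>k=1..m. integral {c (k - 1)..c k} h)"
    using Suc by simp
  moreover have "integral {c 0..c m} h + integral {c m..c (Suc m)} h = integral {c 0..c (Suc m)} h"
    by (rule Henstock_Kurzweil_Integration.integral_combine) (use Suc.prems in auto)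
  ultimately show ?case by simp
qed simp

lemma exists_le_integral_mean:
  fixes f :: "real \<Rightarrow> real"
  assumes "a < b" and f: "f integrable_on {a..b}"
    and mono: "\<And>x y. a < x \<Longrightarrow> x \<le> y \<Longrightarrow> y < b \<Longrightarrow> f x \<le> f y"
  shows "\<exists>p. a < p \<and> p < b \<and> f p \<le> integral {a..b} f / (b - a)"
proof (rule ccontr)
  define \<mu> where "\<mu> = integral {a..b} f / (b - a)"
  define m where "m = (a + b) / 2"
  assume "\<not> ?thesis"
  then have above: "\<mu> < f x" if "a < x" "x < b" for x
    using that by (auto simp: \<mu>_def not_le)
  have m: "a < m" "m < b" using \<open>a < b\<close> by (auto simp: m_def)
  have "\<mu> * (m - a) \<le> integral {a..m} f"
    by (rule const_mul_length_le_integral)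
      (use m above integrable_subinterval_real[OF f] in \<open>auto intro: less_imp_le\<close>)
  moreover have "f m * (b - m) \<le> integral {m..b} f"
    by (rule const_mul_length_le_integral) (use m mono integrable_subinterval_real[OF f] in auto)
  moreover have "integral {a..m} f + integral {m..b} f = integral {a..b} f"
    by (rule Henstock_Kurzweil_Integration.integral_combine) (use m f in auto)
  moreover have "\<mu> * (b - m) < f m * (b - m)"
    using above m by simp
  ultimately have "\<mu> * (b - a) < integral {a..b} f"
    by (simp add: algebra_simps)
  then show False
    using \<open>a < b\<close> by (simp add: \<mu>_def)
qed

lemma monotone_crossing_point:
  fixes f :: "real \<Rightarrow> real"
  assumes mono: "\<And>x y. a < x \<Longrightarrow> x \<le> y \<Longrightarrow> y < b \<Longrightarrow> f x \<le> f y"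
    and p: "a < p" "p < b" "f p \<le> \<mu>"
  obtains s where "a < s" "s \<le> b"
    "\<And>x. a < x \<Longrightarrow> x < s \<Longrightarrow> f x \<le> \<mu>" "\<And>x. s < x \<Longrightarrow> x < b \<Longrightarrow> \<mu> < f x"
proof
  define L where "L = {x. a < x \<and> x < b \<and> f x \<le> \<mu>}"
  have "p \<in> L" using p by (simp add: L_def)
  have bdd: "bdd_above L" by (auto simp: L_def bdd_above_def intro!: exI[of _ b])
  show "a < Sup L"
    using cSup_upper[OF \<open>p \<in> L\<close> bdd] p by simp
  show "Sup L \<le> b"
    by (rule cSup_least) (use \<open>p \<in> L\<close> in \<open>auto simp: L_def\<close>)
  show "f x \<le> \<mu>" if "a < x" "x < Sup L" for x
  proof -
    obtain y where "y \<in> L" "x < y"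
      using less_cSupE[OF \<open>x < Sup L\<close>] \<open>p \<in> L\<close> by blast
    then show ?thesis using mono[of x y] that by (auto simp: L_def)
  qed
  show "\<mu> < f x" if "Sup L < x" "x < b" for x
  proof -
    have "x \<notin> L" using cSup_upper[OF _ bdd, of x] that by auto
    moreover have "a < x" using cSup_upper[OF \<open>p \<in> L\<close> bdd] p that by simp
    ultimately show ?thesis using that by (auto simp: L_def)
  qed
qed

(* Chebyshev's integral inequality.  Monotonicity is required only on the open interval for f
   and on the half-open one for g, so that f may blow up at b and g at a. *)
lemma integral_mult_le_mean_mult_integral:
  fixes f g :: "real \<Rightarrow> real"
  assumes "a < b" and f: "f integrable_on {a..b}" and g: "g integrable_on {a..b}"
    and fg: "(\<lambda>x. f x * g x) integrable_on {a..b}"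
    and f_mono: "\<And>x y. a < x \<Longrightarrow> x \<le> y \<Longrightarrow> y < b \<Longrightarrow> f x \<le> f y"
    and g_antimono: "\<And>x y. a < x \<Longrightarrow> x \<le> y \<Longrightarrow> y \<le> b \<Longrightarrow> g y \<le> g x"
  shows "integral {a..b} (\<lambda>x. f x * g x) \<le> integral {a..b} f / (b - a) * integral {a..b} g"
proof -
  define \<mu> where "\<mu> = integral {a..b} f / (b - a)"
  have mean: "integral {a..b} f = \<mu> * (b - a)"
    using \<open>a < b\<close> by (simp add: \<mu>_def)
  obtain p where "a < p" "p < b" "f p \<le> \<mu>"
    using exists_le_integral_mean[OF \<open>a < b\<close> f f_mono] by (auto simp: \<mu>_def)
  then obtain s where s: "a < s" "s \<le> b"
    and below: "\<And>x. a < x \<Longrightarrow> x < s \<Longrightarrow> f x \<le> \<mu>" and above: "\<And>x. s < x \<Longrightarrow> x < b \<Longrightarrow> \<mu> < f x"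
    using monotone_crossing_point[of a b f, OF f_mono] by blast
  have sign: "(f x - \<mu>) * (g x - g s) \<le> 0" if "a < x" "x < b" for x
  proof (cases x s rule: linorder_cases)
    case less
    then show ?thesis using below[of x] g_antimono[of x s] that s by (simp add: mult_nonpos_nonneg)
  next
    case greater
    then show ?thesis using above[of x] g_antimono[of s x] that s by (simp add: mult_nonneg_nonpos)
  qed simp
  have "((\<lambda>x. f x * g x - g s * f x - \<mu> * g x + \<mu> * g s) has_integral
      integral {a..b} (\<lambda>x. f x * g x) - g s * integral {a..b} f - \<mu> * integral {a..b} g
        + \<mu> * g s * (b - a)) {a..b}"
    using has_integral_const_real[of "\<mu> * g s" a b] \<open>a < b\<close>
    by (intro has_integral_add has_integral_diff has_integral_mult_right integrable_integral f g fg)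
      (simp add: mult.commute)
  then have "((\<lambda>x. (f x - \<mu>) * (g x - g s)) has_integral
      integral {a..b} (\<lambda>x. f x * g x) - \<mu> * integral {a..b} g) {a<..<b}"
    unfolding has_integral_Icc_iff_Ioo mean by (simp add: algebra_simps)
  then have "integral {a..b} (\<lambda>x. f x * g x) - \<mu> * integral {a..b} g \<le> 0"
    by (rule has_integral_le[OF _ has_integral_0]) (use sign in auto)
  then show ?thesis by (simp add: \<mu>_def)
qed

lemma omega_pos: "0 < \<gamma> \<Longrightarrow> 0 < x \<Longrightarrow> 0 < omega \<gamma> x"
  unfolding omega_def by simp

lemma omega_antimono:
  "0 < \<gamma> \<Longrightarrow> \<gamma> \<le> 1 \<Longrightarrow> 0 < x \<Longrightarrow> x \<le> y \<Longrightarrow> omega \<gamma> y \<le> omega \<gamma> x"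
  unfolding omega_def by (intro divide_right_mono powr_mono2') (auto simp: less_imp_le)

lemma has_integral_omega:
  assumes "0 < \<gamma>" and "0 \<le> x"
  shows "(omega \<gamma> has_integral omega (1 + \<gamma>) x) {0..x}"
proof -
  have "((\<lambda>s. s powr (\<gamma> - 1) / Gamma \<gamma>) has_integral x powr \<gamma> / (\<gamma> * Gamma \<gamma>)) {0..x}"
    using has_integral_divide[OF has_integral_powr_from_0[of "\<gamma> - 1" x]] assms by simp
  moreover have "\<gamma> \<notin> \<int>\<^sub>\<le>\<^sub>0"
    using assms by (auto elim!: nonpos_Ints_cases)
  then have "Gamma (1 + \<gamma>) = \<gamma> * Gamma \<gamma>"
    using Gamma_plus1[of \<gamma>] by (simp add: add.commute)
  ultimately show ?thesis
    by (simp add: omega_def[abs_def])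
qed

lemma integrable_omega_reflected:
  assumes "0 < \<gamma>" and "0 \<le> C"
  shows "(\<lambda>s. omega \<gamma> (C - s)) integrable_on {0..C}"
proof -
  have "(\<lambda>s. s powr (\<gamma> - 1)) integrable_on cbox 0 C"
    using integrable_on_powr_from_0[of "\<gamma> - 1" C] assms by simp
  from integrable_affinity[OF this, of "-1" C]
  have "(\<lambda>s. (C - s) powr (\<gamma> - 1)) integrable_on {0..C}"
    by simp
  then show ?thesis
    unfolding omega_def by (rule integrable_on_divide)
qed

lemma omega_convolution:
  assumes a: "0 < a" and b: "0 < b" and C: "0 < C"
  shows "((\<lambda>s. omega a (C - s) * omega b s) has_integral omega (a + b) C) {0..C}"
proof -
  have Gamma_pos: "0 < Gamma a" "0 < Gamma b" "0 < Gamma (a + b)"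
    using a b by simp_all
  define f where "f t = t powr (b - 1) * (1 - t) powr (a - 1)" for t :: real
  have "(f has_integral Beta b a) (cbox 0 1)"
    using has_integral_Beta_real[OF b a] by (simp add: f_def[abs_def])
  from has_integral_affinity'[OF this, of "1 / C" 0]
  have "((\<lambda>s. f (s / C)) has_integral C * Beta b a) {0..C}"
    using C by (simp add: cbox_interval field_simps)
  from has_integral_mult_right[OF this, of "omega (a + b) C / (C * Beta b a)"]
  have "((\<lambda>s. omega (a + b) C / (C * Beta b a) * f (s / C)) has_integral omega (a + b) C) {0..C}"
    using C Gamma_pos by (simp add: Beta_def add.commute)
  moreover have "omega (a + b) C / (C * Beta b a) * f (s / C) = omega a (C - s) * omega b s"
    if "s \<in> {0..C}" for s
  proof -
    have "1 - s / C = (C - s) / C" using C by (simp add: field_simps)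
    then have "f (s / C) = s powr (b - 1) * (C - s) powr (a - 1) / (C powr (b - 1) * C powr (a - 1))"
      using that C by (simp add: f_def powr_divide)
    also have "C powr (b - 1) * C powr (a - 1) = C powr (a + b - 1) / C"
      using C by (simp add: powr_add[symmetric] powr_diff add.commute)
    finally show ?thesis
      using C Gamma_pos by (simp add: omega_def Beta_def field_simps)
  qed
  ultimately show ?thesis
    by (rule has_integral_eq[rotated])
qed

lemma dcc_0: "dcc A n 0 = 1 / A n 0"
  by (subst dcc.simps) simp

lemma dcc_rec:
  "0 < m \<Longrightarrow> m < n \<Longrightarrow> dcc A n m = 1 / A (n - m) 0 *
     (\<Sum>j = n - m + 1..n. (A j (j - (n - m) - 1) - A j (j - (n - m))) * dcc A n (n - j))"
  by (subst dcc.simps) simp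

declare dcc.simps[simp del]

lemma dcc_nonneg:
  assumes pos: "\<And>j. 1 \<le> j \<Longrightarrow> j \<le> n \<Longrightarrow> 0 < A j 0"
    and antimono: "\<And>j k. 1 \<le> k \<Longrightarrow> k < j \<Longrightarrow> j \<le> n \<Longrightarrow> A j (j - k) \<le> A j (j - k - 1)"
    and "m < n"
  shows "0 \<le> dcc A n m"
  using \<open>m < n\<close>
proof (induction m rule: less_induct)
  case (less m)
  show ?case
  proof (cases "m = 0")
    case True
    then show ?thesis using pos[of n] less.prems by (simp add: dcc_0)
  next
    case False
    have "0 \<le> (\<Sum>j = n - m + 1..n. (A j (j - (n - m) - 1) - A j (j - (n - m))) * dcc A n (n - j))"
    proof (rule sum_nonneg)
      fix j assume j: "j \<in> {n - m + 1..n}"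
      then have "A j (j - (n - m)) \<le> A j (j - (n - m) - 1)"
        using antimono[of "n - m" j] less.prems False by auto
      moreover have "0 \<le> dcc A n (n - j)"
        using less.IH[of "n - j"] j False less.prems by auto
      ultimately show "0 \<le> (A j (j - (n - m) - 1) - A j (j - (n - m))) * dcc A n (n - j)"
        by simp
    qed
    moreover have "0 < A (n - m) 0"
      using pos[of "n - m"] less.prems False by auto
    ultimately show ?thesis
      using False less.prems by (simp add: dcc_rec)
  qed
qed

lemma dcc_complementary:
  assumes "\<And>j. 1 \<le> j \<Longrightarrow> j \<le> n \<Longrightarrow> A j 0 \<noteq> 0" and "1 \<le> k" and "k \<le> n"
  shows "(\<Sum>j = k..n. dcc A n (n - j) * A j (j - k)) = 1"
  using assms(2,3)
proof (induction "n - k" arbitrary: k)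
  case 0
  then show ?case using assms(1)[of n] by (simp add: dcc_0)
next
  case (Suc d)
  then have "k < n" by simp
  have rec: "dcc A n (n - k) * A k 0 =
      (\<Sum>j = k + 1..n. (A j (j - k - 1) - A j (j - k)) * dcc A n (n - j))"
    using dcc_rec[of "n - k" n A] \<open>k < n\<close> Suc.prems assms(1)[of k] by simp
  have "(\<Sum>j = k..n. dcc A n (n - j) * A j (j - k))
      = dcc A n (n - k) * A k 0 + (\<Sum>j = k + 1..n. dcc A n (n - j) * A j (j - k))"
    using \<open>k < n\<close> by (simp add: sum.atLeast_Suc_atMost)
  also have "\<dots> = (\<Sum>j = k + 1..n. dcc A n (n - j) * A j (j - (k + 1)))"
    unfolding rec by (simp add: sum.distrib[symmetric] algebra_simps)
  also have "\<dots> = 1"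
    using Suc.hyps(1)[of "k + 1"] Suc.hyps(2) \<open>k < n\<close> by simp
  finally show ?case .
qed

lemma sum_triangle_swap:
  fixes h :: "nat \<Rightarrow> nat \<Rightarrow> 'a :: comm_monoid_add"
  shows "(\<Sum>j = 1..n. \<Sum>k = 1..j. h j k) = (\<Sum>k = 1..n. \<Sum>j = k..n. h j k)"
proof (induction n)
  case (Suc n)
  have "(\<Sum>k = 1..n. \<Sum>j = k..Suc n. h j k) = (\<Sum>k = 1..n. (\<Sum>j = k..n. h j k) + h (Suc n) k)"
    by (intro sum.cong) auto
  then show ?case using Suc by (simp add: sum.distrib ac_simps)
qed simp

lemma dcc_sum_le:
  assumes pos: "\<And>j. 1 \<le> j \<Longrightarrow> j \<le> n \<Longrightarrow> 0 < A j 0"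
    and antimono: "\<And>j k. 1 \<le> k \<Longrightarrow> k < j \<Longrightarrow> j \<le> n \<Longrightarrow> A j (j - k) \<le> A j (j - k - 1)"
    and weighted: "\<And>j. 1 \<le> j \<Longrightarrow> j \<le> n \<Longrightarrow> 1 \<le> (\<Sum>k = 1..j. A j (j - k) * \<Delta> k)"
  shows "(\<Sum>j = 1..n. dcc A n (n - j)) \<le> (\<Sum>k = 1..n. \<Delta> k)"
proof -
  have "(\<Sum>j = 1..n. dcc A n (n - j)) \<le> (\<Sum>j = 1..n. dcc A n (n - j) * (\<Sum>k = 1..j. A j (j - k) * \<Delta> k))"
  proof (rule sum_mono)
    fix j assume j: "j \<in> {1..n}"
    have "0 \<le> dcc A n (n - j)"
      by (rule dcc_nonneg) (use pos antimono j in auto)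
    with weighted[of j] j show "dcc A n (n - j) \<le> dcc A n (n - j) * (\<Sum>k = 1..j. A j (j - k) * \<Delta> k)"
      using mult_left_mono[of 1 _ "dcc A n (n - j)"] by simp
  qed
  also have "\<dots> = (\<Sum>j = 1..n. \<Sum>k = 1..j. dcc A n (n - j) * A j (j - k) * \<Delta> k)"
    by (simp add: sum_distrib_left mult.assoc)
  also have "\<dots> = (\<Sum>k = 1..n. \<Sum>j = k..n. dcc A n (n - j) * A j (j - k) * \<Delta> k)"
    by (rule sum_triangle_swap)
  also have "\<dots> = (\<Sum>k = 1..n. \<Delta> k)"
  proof (rule sum.cong)
    fix k assume "k \<in> {1..n}"
    then have "(\<Sum>j = k..n. dcc A n (n - j) * A j (j - k)) = 1"
      using pos by (intro dcc_complementary) (auto simp: less_le)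
    then show "(\<Sum>j = k..n. dcc A n (n - j) * A j (j - k) * \<Delta> k) = \<Delta> k"
      by (simp add: sum_distrib_right[symmetric])
  qed simp
  finally show ?thesis .
qed

(* c k plays the role of t_(k-1/2). *)
locale averaged_kernel =
  fixes \<alpha> :: real and N :: nat and c :: "nat \<Rightarrow> real" and A :: "nat \<Rightarrow> nat \<Rightarrow> real"
  assumes alpha_pos: "0 < \<alpha>" and alpha_less_1: "\<alpha> < 1"
    and c_0: "c 0 = 0"
    and c_step: "\<And>k. 1 \<le> k \<Longrightarrow> k \<le> N \<Longrightarrow> c (k - 1) < c k"
    and A_eq: "\<And>j m. m < j \<Longrightarrow> A j m =
      integral {c (j - m - 1)..c (j - m)} (\<lambda>s. omega (1 - \<alpha>) (c j - s)) / (c (j - m) - c (j - m - 1))"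
begin

definition kernel :: "nat \<Rightarrow> real \<Rightarrow> real" where
  "kernel j s = omega (1 - \<alpha>) (c j - s)"

lemma c_mono: "i \<le> j \<Longrightarrow> j \<le> N \<Longrightarrow> c i \<le> c j"
proof (induction j rule: dec_induct)
  case (step n)
  then show ?case using c_step[of "Suc n"] by simp
qed simp

lemma c_cell:
  assumes "1 \<le> k" "k \<le> j" "j \<le> N"
  shows "0 \<le> c (k - 1)" "c (k - 1) < c k" "c k \<le> c j"
  using c_mono[of 0 "k - 1"] c_step[of k] c_mono[of k j] assms c_0 by auto

lemma integrable_on_cell:
  fixes h :: "real \<Rightarrow> real"
  assumes "h integrable_on {0..c j}" "1 \<le> k" "k \<le> j" "j \<le> N"
  shows "h integrable_on {c (k - 1)..c k}"
  by (rule integrable_subinterval_real[OF assms(1)]) (use c_cell[OF assms(2-4)] in auto)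

lemma A_cell: "1 \<le> k \<Longrightarrow> k \<le> j \<Longrightarrow> A j (j - k) = integral {c (k - 1)..c k} (kernel j) / (c k - c (k - 1))"
  using A_eq[of "j - k" j] by (simp add: kernel_def[abs_def])

lemma kernel_pos: "s < c j \<Longrightarrow> 0 < kernel j s"
  unfolding kernel_def using alpha_less_1 by (intro omega_pos) auto

lemma kernel_mono: "x \<le> y \<Longrightarrow> y < c j \<Longrightarrow> kernel j x \<le> kernel j y"
  unfolding kernel_def using alpha_pos alpha_less_1 by (intro omega_antimono) auto

lemma kernel_integrable: "j \<le> N \<Longrightarrow> kernel j integrable_on {0..c j}"
  unfolding kernel_def[abs_def] using alpha_less_1 c_mono[of 0 j] c_0
  by (intro integrable_omega_reflected) auto

lemma A_pos:
  assumes "1 \<le> j" "j \<le> N"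
  shows "0 < A j 0"
proof -
  note cell = c_cell[OF assms(1) order_refl assms(2)]
  have "kernel j (c (j - 1)) * (c j - c (j - 1)) \<le> integral {c (j - 1)..c j} (kernel j)"
    by (rule const_mul_length_le_integral)
      (use cell kernel_mono integrable_on_cell[OF kernel_integrable] assms in auto)
  moreover have "0 < kernel j (c (j - 1)) * (c j - c (j - 1))"
    using cell kernel_pos by simp
  ultimately show ?thesis
    using A_cell[of j j] assms cell by simp
qed

lemma A_antimono:
  assumes "1 \<le> k" "k < j" "j \<le> N"
  shows "A j (j - k) \<le> A j (j - k - 1)"
proof -
  note cell = c_cell[OF assms(1) _ assms(3)] and next_cell = c_cell[of "k + 1" j]
  have "c k < c j"
    using next_cell assms by simp
  have "integral {c (k - 1)..c k} (kernel j) \<le> kernel j (c k) * (c k - c (k - 1))"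
    by (rule integral_le_const_mul_length)
      (use cell \<open>c k < c j\<close> kernel_mono integrable_on_cell[OF kernel_integrable] assms in auto)
  then have "A j (j - k) \<le> kernel j (c k)"
    using A_cell[of k j] cell assms by (simp add: pos_divide_le_eq)
  also have "kernel j (c k) * (c (k + 1) - c k) \<le> integral {c k..c (k + 1)} (kernel j)"
    by (rule const_mul_length_le_integral)
      (use next_cell kernel_mono integrable_on_cell[OF kernel_integrable, of j "k + 1"] assms in auto)
  then have "kernel j (c k) \<le> A j (j - k - 1)"
    using A_cell[of "k + 1" j] next_cell assms by (simp add: pos_le_divide_eq)
  finally show ?thesis .
qed

lemma A_weighted_sum_ge_1:
  assumes "1 \<le> j" "j \<le> N"
  shows "1 \<le> (\<Sum>k = 1..j. A j (j - k) * integral {c (k - 1)..c k} (omega \<alpha>))"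
proof -
  have "0 < c j"
    using c_cell[OF assms(1) order_refl assms(2)] by simp
  then have conv: "((\<lambda>s. kernel j s * omega \<alpha> s) has_integral 1) {0..c j}"
    using omega_convolution[of "1 - \<alpha>" \<alpha> "c j"] alpha_pos alpha_less_1
    by (simp add: kernel_def omega_def)
  have omega_integrable: "omega \<alpha> integrable_on {0..c j}"
    using has_integral_integrable[OF has_integral_omega[OF alpha_pos, of "c j"]] \<open>0 < c j\<close> by simp
  have "1 = integral {c 0..c j} (\<lambda>s. kernel j s * omega \<alpha> s)"
    using conv c_0 by (simp add: integral_unique)
  also have "\<dots> = (\<Sum>k = 1..j. integral {c (k - 1)..c k} (\<lambda>s. kernel j s * omega \<alpha> s))"
    by (rule integral_sum_cells) (use c_mono assms conv c_0 in auto)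
  also have "\<dots> \<le> (\<Sum>k = 1..j. A j (j - k) * integral {c (k - 1)..c k} (omega \<alpha>))"
  proof (rule sum_mono)
    fix k assume k: "k \<in> {1..j}"
    note cell = c_cell[of k j] and on_cell = integrable_on_cell[of _ j k]
    have "integral {c (k - 1)..c k} (\<lambda>s. kernel j s * omega \<alpha> s)
        \<le> integral {c (k - 1)..c k} (kernel j) / (c k - c (k - 1)) * integral {c (k - 1)..c k} (omega \<alpha>)"
    proof (rule integral_mult_le_mean_mult_integral)
      show "kernel j x \<le> kernel j y" if "c (k - 1) < x" "x \<le> y" "y < c k" for x y
        using that cell k assms by (intro kernel_mono) auto
      show "omega \<alpha> y \<le> omega \<alpha> x" if "c (k - 1) < x" "x \<le> y" "y \<le> c k" for x y
        using that cell k assms alpha_pos alpha_less_1 by (intro omega_antimono) auto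
    qed (use cell on_cell k assms kernel_integrable omega_integrable conv in auto)
    then show "integral {c (k - 1)..c k} (\<lambda>s. kernel j s * omega \<alpha> s)
        \<le> A j (j - k) * integral {c (k - 1)..c k} (omega \<alpha>)"
      using A_cell[of k j] k by simp
  qed
  finally show ?thesis .
qed

theorem dcc_bound:
  assumes "1 \<le> n" "n \<le> N"
  shows "(\<forall>k\<in>{1..n}. 0 \<le> dcc A n (n - k)) \<and> (\<Sum>j = 1..n. dcc A n (n - j)) \<le> omega (1 + \<alpha>) (c n)"
proof
  show "\<forall>k\<in>{1..n}. 0 \<le> dcc A n (n - k)"
    using A_pos A_antimono assms by (intro ballI dcc_nonneg) auto
  have omega_integrable: "omega \<alpha> integrable_on {c 0..c n}"
    using has_integral_omega[OF alpha_pos, of "c n"] c_0 c_mono[of 0 n] assms by auto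
  have "(\<Sum>j = 1..n. dcc A n (n - j)) \<le> (\<Sum>k = 1..n. integral {c (k - 1)..c k} (omega \<alpha>))"
    by (rule dcc_sum_le) (use A_pos A_antimono A_weighted_sum_ge_1 assms in auto)
  also have "\<dots> = integral {c 0..c n} (omega \<alpha>)"
    by (rule integral_sum_cells[symmetric]) (use c_mono assms omega_integrable in auto)
  also have "\<dots> = omega (1 + \<alpha>) (c n)"
    using has_integral_omega[OF alpha_pos, of "c n"] c_0 c_mono[of 0 n] assms
    by (simp add: integral_unique)
  finally show "(\<Sum>j = 1..n. dcc A n (n - j)) \<le> omega (1 + \<alpha>) (c n)" .
qed

end

lemma tauhalf_eq_tmid_diff: "1 \<le> k \<Longrightarrow> tauhalf t k = tmid t k - tmid t (k - 1)"
  by (cases "k = 1") (auto simp: tmid_def tauhalf_def tau_def field_simps)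

lemma averaged_kernel_acoef:
  assumes "0 < \<alpha>" "\<alpha> < 1" "t 0 = 0" and t_step: "\<And>n. 1 \<le> n \<Longrightarrow> n \<le> N \<Longrightarrow> t (n - 1) < t n"
  shows "averaged_kernel \<alpha> N (tmid t) (acoef t \<alpha>)"
proof
  show "tmid t (k - 1) < tmid t k" if "1 \<le> k" "k \<le> N" for k
  proof -
    have "0 < tau t k" and "2 \<le> k \<Longrightarrow> 0 < tau t (k - 1)"
      using t_step[of k] t_step[of "k - 1"] that by (auto simp: tau_def)
    then have "0 < tauhalf t k"
      using that by (cases "k = 1") (auto simp: tauhalf_def)
    then show ?thesis
      using tauhalf_eq_tmid_diff[OF that(1)] by simp
  qed
  show "acoef t \<alpha> j m = integral {tmid t (j - m - 1)..tmid t (j - m)} (\<lambda>s. omega (1 - \<alpha>) (tmid t j - s))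
      / (tmid t (j - m) - tmid t (j - m - 1))" if "m < j" for j m
    using tauhalf_eq_tmid_diff[of "j - m" t] that by (simp add: acoef_def Let_def)
qed (use assms in \<open>simp_all add: tmid_def\<close>)

theorem lemma2p3:
  fixes T \<alpha> :: real and N :: nat and t :: "nat \<Rightarrow> real"
  assumes "T > 0" and "0 < \<alpha>" and "\<alpha> < 1"
    and "t 0 = 0" and "t N = T"
    and "\<And>n. 1 \<le> n \<Longrightarrow> n \<le> N \<Longrightarrow> t (n - 1) < t n"
    and "\<And>n. 2 \<le> n \<Longrightarrow> n \<le> N \<Longrightarrow> tau t (n - 1) \<le> tau t n"
  shows "\<forall>n\<in>{1..N}.
           (\<forall>k\<in>{1..n}. dcc (acoef t \<alpha>) n (n - k) \<ge> 0) \<and>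
           (\<Sum>j = 1..n. dcc (acoef t \<alpha>) n (n - j)) \<le> omega (1 + \<alpha>) (tmid t n)"
proof
  fix n assume "n \<in> {1..N}"
  interpret averaged_kernel \<alpha> N "tmid t" "acoef t \<alpha>"
    using averaged_kernel_acoef assms(2-4,6) by blast
  show "(\<forall>k\<in>{1..n}. dcc (acoef t \<alpha>) n (n - k) \<ge> 0) \<and>
      (\<Sum>j = 1..n. dcc (acoef t \<alpha>) n (n - j)) \<le> omega (1 + \<alpha>) (tmid t n)"
    using dcc_bound \<open>n \<in> {1..N}\<close> by simp
qed

end
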